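(* Let $p>d+1$. For every function $u:\mathbb Z^d\to\mathbb R$ and every $a\in\Omega$, $$\sum_{b\in\mathbb B^d}|\nabla u(b)|^2\,\mathrm{dist}_a^{-p}(x_b,y_b)\le C(p,d)\sum_{b\in\mathbb B^d}a(b)|\nabla u(b)|^2,$$ with $C(p,d):=\sum_{x\in\mathbb Z^d}(|x|+1)^{1-p}$, whenever the sums converge (with the convention $1/\infty=0$).
   Context: $\mathbb B^d$ is the set of nearest-neighbour bonds $\{x,x+e_i\}$ of $\mathbb Z^d$; $x_b,y_b$ endpoints of $b$ with $y_b-x_b\in\{e_1,\dots,e_d\}$; $\nabla u(b)=u(y_b)-u(x_b)$. $\Omega=[0,1]^{\mathbb B^d}$. Chemical distance $\mathrm{dist}_a(x,y)=\inf\{\sum_{b\in\pi}a(b)^{-1}:\pi$ a nearest-neighbour path from $x$ to $y\}$, with $1/0=+\infty$. *)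

theory Defs
  imports "HOL-Analysis.Analysis"
begin

text \<open>Points of Z^d are vectors int^'d ('d a finite index type, d = CARD('d)).
  A bond {x, x+e_i} is encoded as the pair (x, i); so x_b = fst b, y_b = fst b + e_i.\<close>

type_synonym 'd bond = "(int ^ 'd) \<times> 'd"

definition unitv :: "'d::finite \<Rightarrow> int ^ 'd" where
  "unitv i = (\<chi> j. if j = i then 1 else 0)"

definition xb :: "'d::finite bond \<Rightarrow> int ^ 'd" where
  "xb b = fst b"

definition yb :: "'d::finite bond \<Rightarrow> int ^ 'd" where
  "yb b = fst b + unitv (snd b)"

definition grad :: "(int ^ 'd \<Rightarrow> real) \<Rightarrow> 'd::finite bond \<Rightarrow> real" where
  "grad u b = u (yb b) - u (xb b)"

definition lnorm :: "int ^ 'd::finite \<Rightarrow> real" where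
  "lnorm x = sqrt (\<Sum>i\<in>UNIV. (real_of_int (x $ i))\<^sup>2)"

definition adj :: "int ^ 'd::finite \<Rightarrow> int ^ 'd \<Rightarrow> bool" where
  "adj v w \<longleftrightarrow> (\<exists>i. w = v + unitv i \<or> v = w + unitv i)"

definition bond_of :: "int ^ 'd::finite \<Rightarrow> int ^ 'd \<Rightarrow> 'd bond" where
  "bond_of v w = (if \<exists>i. w = v + unitv i then (v, SOME i. w = v + unitv i)
                  else (w, SOME i. v = w + unitv i))"

definition nn_path :: "int ^ 'd::finite \<Rightarrow> int ^ 'd \<Rightarrow> (int ^ 'd) list \<Rightarrow> bool" where
  "nn_path x y vs \<longleftrightarrow> vs \<noteq> [] \<and> hd vs = x \<and> last vs = y \<and>
     (\<forall>k < length vs - 1. adj (vs ! k) (vs ! Suc k))"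

definition inv_cond :: "real \<Rightarrow> ennreal" where
  "inv_cond t = (if t = 0 then \<infinity> else ennreal (1 / t))"

definition path_weight :: "('d::finite bond \<Rightarrow> real) \<Rightarrow> (int ^ 'd) list \<Rightarrow> ennreal" where
  "path_weight a vs = sum_list (map (\<lambda>(v, w). inv_cond (a (bond_of v w))) (zip vs (tl vs)))"

definition chem_dist :: "('d::finite bond \<Rightarrow> real) \<Rightarrow> int ^ 'd \<Rightarrow> int ^ 'd \<Rightarrow> ennreal" where
  "chem_dist a x y = (INF vs \<in> {vs. nn_path x y vs}. path_weight a vs)"

definition chem_dist_pow :: "('d::finite bond \<Rightarrow> real) \<Rightarrow> real \<Rightarrow> int ^ 'd \<Rightarrow> int ^ 'd \<Rightarrow> real" where
  "chem_dist_pow a p x y = (if chem_dist a x y = \<infinity> then 0 else (enn2real (chem_dist a x y)) powr (- p))"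

definition Omega :: "('d::finite bond \<Rightarrow> real) set" where
  "Omega = {a. \<forall>b. 0 \<le> a b \<and> a b \<le> 1}"

definition Cpd :: "real \<Rightarrow> 'd::finite itself \<Rightarrow> real" where
  "Cpd p _ = (\<Sum>\<^sub>\<infinity>x::int ^ 'd. (lnorm x + 1) powr (1 - p))"

end

theory Submission
  imports Defs
begin

text \<open>Fix a bond b, some q > 1 and a path from x_b to y_b of weight W < q dist_a(x_b, y_b).
  Telescoping along the loop-erased path and Cauchy-Schwarz give
  |\<nabla>u(b)|^2 \<le> W \<Sum>_e a(e) |\<nabla>u(e)|^2, summed over the bonds e of the path.
  As a \<le> 1, the path has at most W + 1 vertices, so |x_b + y_b - x_e - y_e| + 1 \<le> W < q dist_a(x_b, y_b)
  for each such e, whence the b-th term of the left-hand side is at most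
  q^p \<Sum>_e a(e) |\<nabla>u(e)|^2 (|x_b + y_b - x_e - y_e| + 1)^(1-p).
  Summing over b and exchanging the sums, injectivity of b \<mapsto> x_b + y_b bounds the weight
  collected by each e by C(p,d); then let q tend to 1. C(p,d) is finite since
  (|x| + 1)^(-d r) \<le> \<Prod>_i (|x_i| + 1)^(-r) with r = (p - 1)/d > 1.\<close>

lemma summable_on_nat_powr_shift:
  assumes "r > 1"
  shows "(\<lambda>n::nat. (real n + 1) powr (-r)) summable_on UNIV"
proof -
  have "summable (\<lambda>n::nat. real n powr (-r))" using assms summable_real_powr_iff by simp
  then have "summable (\<lambda>n::nat. real (Suc n) powr (-r))" by (subst summable_Suc_iff)
  then show ?thesis by (subst summable_on_UNIV_nonneg_real_iff) (auto simp: add.commute)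
qed

lemma summable_on_int_abs_powr:
  assumes "r > 1"
  shows "(\<lambda>k::int. (real_of_int \<bar>k\<bar> + 1) powr (-r)) summable_on UNIV"
proof -
  let ?h = "\<lambda>k::int. (real_of_int \<bar>k\<bar> + 1) powr (-r)"
  have UNIV_int: "(UNIV::int set) = range int \<union> range (\<lambda>n. - int n - 1)"
  proof (rule set_eqI)
    fix k :: int
    show "k \<in> UNIV \<longleftrightarrow> k \<in> range int \<union> range (\<lambda>n. - int n - 1)"
    proof (cases "k \<ge> 0")
      case True then show ?thesis by (auto intro!: image_eqI[of _ _ "nat k"])
    next
      case False then show ?thesis by (auto intro!: image_eqI[of _ _ "nat (-k-1)"])
    qed
  qed
  have "?h summable_on range int"
    by (subst summable_on_reindex) (use summable_on_nat_powr_shift[OF assms] in \<open>auto simp: o_def\<close>)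
  moreover have "?h summable_on range (\<lambda>n. - int n - 1)"
  proof (subst summable_on_reindex)
    show "inj_on (\<lambda>n. - int n - 1) UNIV" by (auto simp: inj_on_def)
    show "(?h \<circ> (\<lambda>n. - int n - 1)) summable_on UNIV"
      by (rule summable_on_comparison_test[OF summable_on_nat_powr_shift[OF assms]])
        (use assms in \<open>auto intro!: powr_mono2'\<close>)
  qed
  ultimately show ?thesis
    unfolding UNIV_int by (rule summable_on_Un_disjoint) auto
qed

definition real_vec :: "int ^ 'd::finite \<Rightarrow> real ^ 'd" where
  "real_vec x = (\<chi> i. real_of_int (x $ i))"

lemma real_vec_diff [simp]: "real_vec (x - y) = real_vec x - real_vec y"
  and real_vec_add [simp]: "real_vec (x + y) = real_vec x + real_vec y"
  and real_vec_unitv [simp]: "real_vec (unitv i) = axis i 1"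
  by (auto simp: real_vec_def unitv_def axis_def vec_eq_iff)

lemma lnorm_eq_norm: "lnorm x = norm (real_vec x)"
  by (simp add: lnorm_def norm_vec_def L2_set_def real_vec_def)

lemma lnorm_nonneg: "lnorm x \<ge> 0"
  by (simp add: lnorm_eq_norm)

lemma abs_component_le_lnorm: "real_of_int \<bar>x $ i\<bar> \<le> lnorm x"
  using component_le_norm_cart[of "real_vec x" i] by (simp add: lnorm_eq_norm real_vec_def)

lemma lnorm_powr_le_prod:
  fixes x :: "int ^ 'd::finite" and r :: real
  assumes "r \<ge> 0"
  shows "(lnorm x + 1) powr (- (CARD('d) * r)) \<le> (\<Prod>i\<in>UNIV. (real_of_int \<bar>x $ i\<bar> + 1) powr (-r))"
proof -
  have pos: "lnorm x + 1 > 0" using lnorm_nonneg[of x] by linarith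
  have "(\<Prod>i\<in>UNIV. real_of_int \<bar>x $ i\<bar> + 1) \<le> (\<Prod>i\<in>(UNIV::'d set). lnorm x + 1)"
    by (rule prod_mono) (use abs_component_le_lnorm[of x] in auto)
  then have prod_le: "(\<Prod>i\<in>UNIV. real_of_int \<bar>x $ i\<bar> + 1) \<le> (lnorm x + 1) ^ CARD('d)"
    by simp
  have "(lnorm x + 1) powr (- (CARD('d) * r)) = ((lnorm x + 1) ^ CARD('d)) powr (-r)"
    using pos by (simp add: powr_powr powr_realpow[symmetric])
  also have "\<dots> \<le> (\<Prod>i\<in>UNIV. real_of_int \<bar>x $ i\<bar> + 1) powr (-r)"
    using assms prod_le by (intro powr_mono2') (auto intro: prod_pos)
  also have "\<dots> = (\<Prod>i\<in>UNIV. (real_of_int \<bar>x $ i\<bar> + 1) powr (-r))"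
    by (rule prod_powr_distrib)
  finally show ?thesis .
qed

lemma summable_on_lnorm_powr:
  assumes "s > real CARD('d::finite)"
  shows "(\<lambda>x::int ^ 'd. (lnorm x + 1) powr (-s)) summable_on UNIV"
proof -
  define r where "r = s / CARD('d)"
  have r: "r > 1" "s = CARD('d) * r" using assms by (simp_all add: r_def field_simps)
  define h where "h = (\<lambda>k::int. (real_of_int \<bar>k\<bar> + 1) powr (-r))"
  define S where "S = infsum h UNIV"
  have h_le_S: "sum h K \<le> S" if "finite K" for K
    unfolding S_def h_def
    by (rule finite_sum_le_infsum[OF summable_on_int_abs_powr[OF r(1)] that]) auto
  have "sum (\<lambda>x::int ^ 'd. (lnorm x + 1) powr (-s)) F \<le> S ^ CARD('d)" if F: "finite F" for F
  proof -
    have "sum (\<lambda>x::int ^ 'd. (lnorm x + 1) powr (-s)) F \<le> (\<Sum>x\<in>F. \<Prod>i\<in>UNIV. h (x $ i))"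
      by (rule sum_mono) (use lnorm_powr_le_prod[of r] r in \<open>simp add: h_def\<close>)
    also have "\<dots> = (\<Sum>g\<in>vec_nth ` F. \<Prod>i\<in>UNIV. h (g i))"
      by (subst sum.reindex) (auto simp: inj_on_def vec_eq_iff)
    also have "\<dots> \<le> (\<Sum>g\<in>PiE UNIV (\<lambda>i. (\<lambda>x. x $ i) ` F). \<Prod>i\<in>UNIV. h (g i))"
      by (rule sum_mono2) (use F in \<open>auto intro!: finite_PiE prod_nonneg simp: h_def\<close>)
    also have "\<dots> = (\<Prod>i\<in>UNIV. \<Sum>k\<in>(\<lambda>x. x $ i) ` F. h k)"
      by (rule prod_sum_PiE[symmetric]) (use F in auto)
    also have "\<dots> \<le> (\<Prod>i\<in>(UNIV::'d set). S)"
      by (rule prod_mono) (use F h_le_S in \<open>auto intro: sum_nonneg simp: h_def\<close>)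
    finally show ?thesis by simp
  qed
  then show ?thesis
    by (intro nonneg_bdd_above_summable_on) (auto simp: bdd_above_def)
qed

fun bonds_of_path :: "(int ^ 'd::finite) list \<Rightarrow> 'd bond list" where
  "bonds_of_path (v # w # vs) = bond_of v w # bonds_of_path (w # vs)"
| "bonds_of_path _ = []"

lemma path_weight_eq_sum_bonds:
  "path_weight a vs = (\<Sum>e\<leftarrow>bonds_of_path vs. inv_cond (a e))"
  unfolding path_weight_def by (induction vs rule: bonds_of_path.induct) auto

lemma length_bonds_of_path: "length (bonds_of_path vs) = length vs - 1"
  by (induction vs rule: bonds_of_path.induct) auto

lemma nn_path_iff: "nn_path x y vs \<longleftrightarrow> vs \<noteq> [] \<and> hd vs = x \<and> last vs = y \<and> successively adj vs"
  unfolding nn_path_def successively_conv_nth by auto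

lemma bond_of_ends:
  assumes "adj v w"
  shows "xb (bond_of v w) = v \<and> yb (bond_of v w) = w \<or> xb (bond_of v w) = w \<and> yb (bond_of v w) = v"
proof (cases "\<exists>i. w = v + unitv i")
  case True
  then have "w = v + unitv (SOME i. w = v + unitv i)" by (rule someI_ex)
  then show ?thesis using True by (simp add: bond_of_def xb_def yb_def)
next
  case False
  then have "\<exists>i. v = w + unitv i" using assms unfolding adj_def by auto
  then have "v = w + unitv (SOME i. v = w + unitv i)" by (rule someI_ex)
  then show ?thesis using False by (simp add: bond_of_def xb_def yb_def)
qed

lemma mem_bonds_of_path:
  "e \<in> set (bonds_of_path vs) \<Longrightarrow> \<exists>ys v w zs. vs = ys @ v # w # zs \<and> e = bond_of v w"
proof (induction vs rule: bonds_of_path.induct)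
  case (1 v w vs)
  show ?case
  proof (cases "e = bond_of v w")
    case True then show ?thesis by (intro exI[of _ "[]"]) auto
  next
    case False
    then obtain ys v' w' zs where "w # vs = ys @ v' # w' # zs" "e = bond_of v' w'"
      using 1 by auto
    then show ?thesis by (intro exI[of _ "v # ys"]) auto
  qed
qed auto

lemma bond_ends_in_path:
  assumes "successively adj vs" "e \<in> set (bonds_of_path vs)"
  shows "xb e \<in> set vs" "yb e \<in> set vs"
proof -
  obtain ys v w zs where vs: "vs = ys @ v # w # zs" and e: "e = bond_of v w"
    using mem_bonds_of_path[OF assms(2)] by blast
  have "adj v w" using assms(1) unfolding vs by (simp add: successively_append_iff)
  then show "xb e \<in> set vs" "yb e \<in> set vs" using bond_of_ends[of v w] unfolding vs e by auto
qed

lemma bonds_of_path_append_subset: "set (bonds_of_path zs) \<subseteq> set (bonds_of_path (ys @ zs))"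
proof (induction ys)
  case (Cons y ys)
  then show ?case by (cases "ys @ zs") auto
qed auto

text \<open>Loop erasure lets the telescoping bound run over the set of bonds of a path, each counted once;
  this is what makes the exchange of sums in the final estimate lose nothing.\<close>

lemma loop_erased_path:
  assumes "successively adj vs" "vs \<noteq> []"
  shows "\<exists>vs'. successively adj vs' \<and> vs' \<noteq> [] \<and> hd vs' = hd vs \<and> last vs' = last vs
           \<and> distinct vs' \<and> set (bonds_of_path vs') \<subseteq> set (bonds_of_path vs)"
  using assms
proof (induction vs rule: bonds_of_path.induct)
  case (1 v w vs)
  then obtain rs where rs: "successively adj rs" "rs \<noteq> []" "hd rs = w" "last rs = last (w # vs)"
    "distinct rs" "set (bonds_of_path rs) \<subseteq> set (bonds_of_path (w # vs))"
    by (auto simp: successively_Cons)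
  show ?case
  proof (cases "v \<in> set rs")
    case True
    then obtain ys zs where split: "rs = ys @ v # zs" by (meson split_list)
    have "set (bonds_of_path (v # zs)) \<subseteq> set (bonds_of_path rs)"
      unfolding split by (rule bonds_of_path_append_subset)
    with rs show ?thesis
      by (intro exI[of _ "v # zs"]) (auto simp: split successively_append_iff)
  next
    case False
    obtain rs' where "rs = w # rs'" using rs(2,3) by (cases rs) auto
    with rs False 1(2) show ?thesis
      by (intro exI[of _ "v # rs"]) auto
  qed
next
  case ("2_2" v)
  show ?case by (intro exI[of _ "[v]"]) auto
qed auto

lemma abs_diff_le_sum_abs_grad_distinct:
  fixes u :: "int ^ 'd::finite \<Rightarrow> real"
  shows "successively adj vs \<Longrightarrow> distinct vs \<Longrightarrow> vs \<noteq> [] \<Longrightarrow>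
    \<bar>u (last vs) - u (hd vs)\<bar> \<le> (\<Sum>e\<in>set (bonds_of_path vs). \<bar>grad u e\<bar>)"
proof (induction vs rule: bonds_of_path.induct)
  case (1 v w vs)
  then have adj: "adj v w" and path: "successively adj (w # vs)" by auto
  have "bond_of v w \<notin> set (bonds_of_path (w # vs))"
    using bond_ends_in_path[OF path] bond_of_ends[OF adj] 1(3) by fastforce
  moreover have "\<bar>grad u (bond_of v w)\<bar> = \<bar>u w - u v\<bar>"
    using bond_of_ends[OF adj] by (auto simp: grad_def)
  moreover have "\<bar>u (last (w # vs)) - u w\<bar> \<le> (\<Sum>e\<in>set (bonds_of_path (w # vs)). \<bar>grad u e\<bar>)"
    using 1 by auto
  ultimately show ?case by auto
qed auto

lemma abs_diff_le_sum_abs_grad: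
  fixes u :: "int ^ 'd::finite \<Rightarrow> real"
  assumes "successively adj vs" "vs \<noteq> []"
  shows "\<bar>u (last vs) - u (hd vs)\<bar> \<le> (\<Sum>e\<in>set (bonds_of_path vs). \<bar>grad u e\<bar>)"
proof -
  obtain vs' where vs': "successively adj vs'" "vs' \<noteq> []" "hd vs' = hd vs" "last vs' = last vs"
    "distinct vs'" "set (bonds_of_path vs') \<subseteq> set (bonds_of_path vs)"
    using loop_erased_path[OF assms] by blast
  have "\<bar>u (last vs) - u (hd vs)\<bar> \<le> (\<Sum>e\<in>set (bonds_of_path vs'). \<bar>grad u e\<bar>)"
    using abs_diff_le_sum_abs_grad_distinct[OF vs'(1,5,2)] vs'(3,4) by simp
  also have "\<dots> \<le> (\<Sum>e\<in>set (bonds_of_path vs). \<bar>grad u e\<bar>)"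
    by (rule sum_mono2) (use vs'(6) in auto)
  finally show ?thesis .
qed

lemma norm_real_vec_adj: "adj v w \<Longrightarrow> norm (real_vec w - real_vec v) = 1"
  by (auto simp: adj_def)

lemma norm_path_displacement:
  "successively adj vs \<Longrightarrow> vs \<noteq> [] \<Longrightarrow> norm (real_vec (last vs) - real_vec (hd vs)) \<le> real (length vs) - 1"
proof (induction vs rule: bonds_of_path.induct)
  case (1 v w vs)
  have "norm (real_vec (last (w # vs)) - real_vec v)
      \<le> norm (real_vec (last (w # vs)) - real_vec w) + norm (real_vec w - real_vec v)"
    using norm_triangle_ineq[of "real_vec (last (w # vs)) - real_vec w" "real_vec w - real_vec v"]
    by simp
  with 1 norm_real_vec_adj[of v w] show ?case by auto
qed auto

lemma lnorm_path_bond_midpoint: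
  assumes "successively adj vs" "vs \<noteq> []" "e \<in> set (bonds_of_path vs)"
  shows "lnorm (hd vs + last vs - (xb e + yb e)) + 1 \<le> real (length vs - 1)"
proof -
  obtain ys v w zs where vs: "vs = ys @ v # w # zs" and e: "e = bond_of v w"
    using mem_bonds_of_path[OF assms(3)] by blast
  have head: "successively adj (ys @ [v])" and tail: "successively adj (w # zs)" and adj: "adj v w"
    using assms(1) unfolding vs by (auto simp: successively_append_iff successively_Cons)
  have "hd (ys @ [v]) = hd vs" unfolding vs by (cases ys) simp_all
  then have dv: "norm (real_vec v - real_vec (hd vs)) \<le> real (length ys)"
    using norm_path_displacement[OF head] by simp
  have dw: "norm (real_vec (last vs) - real_vec w) \<le> real (length zs)"
    using norm_path_displacement[OF tail] by (simp add: vs)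
  have "xb e + yb e = v + w"
    using bond_of_ends[OF adj] unfolding e by (auto simp: add.commute)
  then have "hd vs + last vs - (xb e + yb e) = (last vs - w) - (v - hd vs)"
    by (simp add: algebra_simps)
  then have "lnorm (hd vs + last vs - (xb e + yb e))
      \<le> norm (real_vec (last vs) - real_vec w) + norm (real_vec v - real_vec (hd vs))"
    unfolding lnorm_eq_norm by (simp only: real_vec_diff norm_triangle_ineq4)
  then show ?thesis using dv dw by (simp add: vs)
qed

lemma inj_bond_midpoint: "inj (\<lambda>b. xb b + yb b)"
proof (rule injI)
  fix b b' :: "'d::finite bond"
  assume eq: "xb b + yb b = xb b' + yb b'"
  obtain x i x' i' where b: "b = (x, i)" and b': "b' = (x', i')" by (cases b, cases b')
  have coord: "2 * x $ k + (if k = i then 1 else 0) = 2 * x' $ k + (if k = i' then 1 else 0)" for k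
    using arg_cong[OF eq, of "\<lambda>z. z $ k"] by (simp add: b b' xb_def yb_def unitv_def)
  have "i = i'"
  proof (rule ccontr)
    assume "i \<noteq> i'"
    then have "2 * x $ i + 1 = 2 * x' $ i" using coord[of i] by simp
    then show False by presburger
  qed
  with coord have "x = x'" by (simp add: vec_eq_iff)
  with \<open>i = i'\<close> show "b = b'" by (simp add: b b')
qed

lemma sum_inv_cond_finite:
  assumes "\<And>e. 0 \<le> a e" "(\<Sum>e\<leftarrow>xs. inv_cond (a e)) \<noteq> \<infinity>"
  shows "(\<forall>e\<in>set xs. 0 < a e) \<and> (\<Sum>e\<leftarrow>xs. inv_cond (a e)) = ennreal (\<Sum>e\<leftarrow>xs. 1 / a e)"
  using assms(2)
proof (induction xs)
  case (Cons x xs)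
  then have "inv_cond (a x) \<noteq> \<infinity>" and rest: "(\<Sum>e\<leftarrow>xs. inv_cond (a e)) \<noteq> \<infinity>" by auto
  then have "a x > 0" using assms(1)[of x] by (auto simp: inv_cond_def order_le_less)
  moreover have "0 \<le> (\<Sum>e\<leftarrow>xs. 1 / a e)" using assms(1) by (intro sum_list_nonneg) auto
  ultimately show ?case using Cons.IH[OF rest] by (simp add: inv_cond_def)
qed simp

lemma length_le_sum_list_inverse:
  fixes a :: "'a \<Rightarrow> real"
  assumes "\<And>e. e \<in> set xs \<Longrightarrow> 0 < a e \<and> a e \<le> 1"
  shows "real (length xs) \<le> (\<Sum>e\<leftarrow>xs. 1 / a e)"
proof -
  have "(\<Sum>e\<leftarrow>xs. 1) \<le> (\<Sum>e\<leftarrow>xs. 1 / a e)"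
    by (rule sum_list_mono) (use assms in auto)
  then show ?thesis by (simp add: sum_list_triv)
qed

lemma sum_set_le_sum_list:
  fixes f :: "'a \<Rightarrow> real"
  shows "(\<And>x. x \<in> set xs \<Longrightarrow> 0 \<le> f x) \<Longrightarrow> sum f (set xs) \<le> (\<Sum>x\<leftarrow>xs. f x)"
proof (induction xs)
  case (Cons x xs)
  then have "sum f (set (x # xs)) \<le> f x + sum f (set xs)"
    by (cases "x \<in> set xs") (auto simp: insert_absorb sum_nonneg)
  with Cons show ?case by simp
qed simp

lemma sq_diff_le_path_energy:
  fixes u :: "int ^ 'd::finite \<Rightarrow> real"
  assumes "successively adj vs" "vs \<noteq> []" "\<And>e. e \<in> set (bonds_of_path vs) \<Longrightarrow> 0 < a e"
  shows "(u (last vs) - u (hd vs))\<^sup>2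
    \<le> (\<Sum>e\<leftarrow>bonds_of_path vs. 1 / a e) * (\<Sum>e\<in>set (bonds_of_path vs). a e * (grad u e)\<^sup>2)"
proof -
  let ?E = "set (bonds_of_path vs)"
  have split: "\<bar>grad u e\<bar> = sqrt (1 / a e) * (sqrt (a e) * \<bar>grad u e\<bar>)" if "e \<in> ?E" for e
    using assms(3)[OF that] by (simp add: real_sqrt_divide)
  have "(u (last vs) - u (hd vs))\<^sup>2 \<le> (\<Sum>e\<in>?E. \<bar>grad u e\<bar>)\<^sup>2"
    using abs_diff_le_sum_abs_grad[OF assms(1,2), of u]
    by (metis abs_ge_zero order_trans power2_abs power_mono)
  also have "\<dots> = (\<Sum>e\<in>?E. sqrt (1 / a e) * (sqrt (a e) * \<bar>grad u e\<bar>))\<^sup>2"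
    using split by (metis (no_types, lifting) sum.cong)
  also have "\<dots> \<le> (\<Sum>e\<in>?E. (sqrt (1 / a e))\<^sup>2) * (\<Sum>e\<in>?E. (sqrt (a e) * \<bar>grad u e\<bar>)\<^sup>2)"
    by (rule Cauchy_Schwarz_ineq_sum)
  also have "\<dots> = (\<Sum>e\<in>?E. 1 / a e) * (\<Sum>e\<in>?E. a e * (grad u e)\<^sup>2)"
    using assms(3) by (simp add: power_mult_distrib less_imp_le cong: sum.cong)
  also have "\<dots> \<le> (\<Sum>e\<leftarrow>bonds_of_path vs. 1 / a e) * (\<Sum>e\<in>?E. a e * (grad u e)\<^sup>2)"
    using assms(3) by (intro mult_right_mono sum_set_le_sum_list sum_nonneg) (auto simp: less_imp_le)
  finally show ?thesis .
qed

lemma near_optimal_path: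
  assumes "chem_dist a x y = ennreal d" "d > 0" "q > 1"
  shows "\<exists>vs. nn_path x y vs \<and> path_weight a vs < ennreal (q * d)"
proof -
  have "(INF vs\<in>{vs. nn_path x y vs}. path_weight a vs) < ennreal (q * d)"
    using assms by (simp add: chem_dist_def[symmetric] ennreal_less_iff)
  then show ?thesis by (auto simp: INF_less_iff)
qed

lemma powr_le_of_le_mult:
  fixes d l q p :: real
  assumes "0 < l" "l \<le> q * d" "q > 0" "p \<ge> 1"
  shows "d powr (1 - p) \<le> q powr (p - 1) * l powr (1 - p)"
proof -
  have "d powr (1 - p) \<le> (l / q) powr (1 - p)"
    using assms by (intro powr_mono2') (auto simp: field_simps)
  also have "\<dots> = q powr (p - 1) * l powr (1 - p)"
    using assms by (simp add: powr_divide powr_diff divide_simps)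
  finally show ?thesis .
qed

lemma sq_grad_le_path_sum:
  fixes u :: "int ^ 'd::finite \<Rightarrow> real"
  assumes A: "a \<in> Omega" and p: "p \<ge> 1" and q: "q > 1" and d: "d > 0"
    and path: "nn_path (xb b) (yb b) vs" and weight: "path_weight a vs < ennreal (q * d)"
  shows "(grad u b)\<^sup>2 * d powr (- p)
    \<le> q powr p * (\<Sum>e\<in>set (bonds_of_path vs).
          a e * (grad u e)\<^sup>2 * (lnorm (xb b + yb b - (xb e + yb e)) + 1) powr (1 - p))"
proof -
  define E where "E = set (bonds_of_path vs)"
  define W where "W = (\<Sum>e\<leftarrow>bonds_of_path vs. 1 / a e)"
  define L where "L e = lnorm (xb b + yb b - (xb e + yb e)) + 1" for e
  have vs: "vs \<noteq> []" "hd vs = xb b" "last vs = yb b" "successively adj vs"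
    using path by (auto simp: nn_path_iff)
  have a01: "0 \<le> a e" "a e \<le> 1" for e using A unfolding Omega_def by blast+
  have "path_weight a vs \<noteq> \<infinity>" using weight by auto
  then have "(\<forall>e\<in>E. 0 < a e) \<and> path_weight a vs = ennreal W"
    unfolding path_weight_eq_sum_bonds E_def W_def by (rule sum_inv_cond_finite[OF a01(1)])
  then have apos: "\<And>e. e \<in> E \<Longrightarrow> 0 < a e" and weight_eq: "path_weight a vs = ennreal W"
    by auto
  have "0 \<le> W" unfolding W_def using apos by (intro sum_list_nonneg) (auto simp: E_def less_imp_le)
  then have W_lt: "W < q * d" using weight weight_eq by (simp add: ennreal_less_iff)
  have len_le_W: "real (length vs - 1) \<le> W"
    using length_le_sum_list_inverse[of "bonds_of_path vs" a] apos a01(2)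
    by (simp add: W_def E_def length_bonds_of_path)
  define SE where "SE = (\<Sum>e\<in>E. a e * (grad u e)\<^sup>2)"
  have SE: "0 \<le> SE" unfolding SE_def using a01(1) by (intro sum_nonneg) simp
  have "(grad u b)\<^sup>2 \<le> W * SE"
    using sq_diff_le_path_energy[OF vs(4,1) apos[unfolded E_def], where u = u] vs
    by (simp add: grad_def W_def E_def SE_def)
  also have "\<dots> \<le> (q * d) * SE" using W_lt SE by (intro mult_right_mono) auto
  finally have "(grad u b)\<^sup>2 * d powr (- p) \<le> (q * d * SE) * d powr (- p)"
    by (rule mult_right_mono) simp
  also have "\<dots> = q * SE * (d * d powr (- p))" by (simp add: mult_ac)
  also have "d * d powr (- p) = d powr (1 - p)"
    using d by (simp add: powr_diff powr_minus divide_inverse)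
  also have "q * SE * d powr (1 - p) = (\<Sum>e\<in>E. q * d powr (1 - p) * (a e * (grad u e)\<^sup>2))"
    unfolding SE_def by (simp add: sum_distrib_left mult_ac)
  also have "\<dots> \<le> (\<Sum>e\<in>E. q * (q powr (p - 1) * L e powr (1 - p)) * (a e * (grad u e)\<^sup>2))"
  proof (intro sum_mono mult_right_mono mult_left_mono)
    fix e assume "e \<in> E"
    have "0 < L e" using lnorm_nonneg unfolding L_def by (smt (verit))
    moreover have "L e \<le> real (length vs - 1)"
      using lnorm_path_bond_midpoint[OF vs(4,1), of e] \<open>e \<in> E\<close> vs(2,3)
      unfolding L_def E_def by simp
    then have "L e \<le> q * d" using len_le_W W_lt by linarith
    ultimately show "d powr (1 - p) \<le> q powr (p - 1) * L e powr (1 - p)"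
      using q p by (intro powr_le_of_le_mult) auto
  qed (use q a01 in auto)
  also have "\<dots> = (q * q powr (p - 1)) * (\<Sum>e\<in>E. a e * (grad u e)\<^sup>2 * L e powr (1 - p))"
    by (simp add: sum_distrib_left mult_ac)
  also have "q * q powr (p - 1) = q powr p"
    using q by (simp add: powr_diff)
  finally show ?thesis unfolding E_def L_def .
qed

lemma bond_term_le_local_sum:
  fixes u :: "int ^ 'd::finite \<Rightarrow> real"
  assumes A: "a \<in> Omega" and p: "p \<ge> 1" and q: "q > 1"
  shows "\<exists>E. finite E \<and> (grad u b)\<^sup>2 * chem_dist_pow a p (xb b) (yb b)
     \<le> q powr p * (\<Sum>e\<in>E. a e * (grad u e)\<^sup>2 * (lnorm (xb b + yb b - (xb e + yb e)) + 1) powr (1 - p))"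
proof -
  define d where "d = enn2real (chem_dist a (xb b) (yb b))"
  show ?thesis
  proof (cases "chem_dist a (xb b) (yb b) = \<infinity> \<or> d = 0")
    \<comment> \<open>d = 0 cannot occur, but then the term vanishes anyway since 0 powr (-p) = 0.\<close>
    case True
    then have "chem_dist_pow a p (xb b) (yb b) = 0" by (auto simp: chem_dist_pow_def d_def)
    then show ?thesis by (intro exI[of _ "{}"]) simp
  next
    case False
    have d: "chem_dist a (xb b) (yb b) = ennreal d" "d > 0"
      using False enn2real_nonneg[of "chem_dist a (xb b) (yb b)"]
      unfolding d_def by (auto simp: ennreal_enn2real_if less_le)
    then obtain vs where "nn_path (xb b) (yb b) vs" "path_weight a vs < ennreal (q * d)"
      using near_optimal_path q by blast
    moreover have "chem_dist_pow a p (xb b) (yb b) = d powr (- p)"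
      using d by (simp add: chem_dist_pow_def)
    ultimately show ?thesis
      using sq_grad_le_path_sum[OF A p q d(2)] by (intro exI[of _ "set (bonds_of_path vs)"]) auto
  qed
qed

lemma sum_bond_midpoint_powr_le_Cpd:
  fixes F :: "'d::finite bond set" and c :: "int ^ 'd"
  assumes p: "p > real CARD('d) + 1" and F: "finite F"
  shows "(\<Sum>b\<in>F. (lnorm (xb b + yb b - c) + 1) powr (1 - p)) \<le> Cpd p TYPE('d)"
proof -
  have "inj_on (\<lambda>b. xb b + yb b - c) F"
    using inj_bond_midpoint by (auto simp: inj_on_def inj_def)
  then have "(\<Sum>b\<in>F. (lnorm (xb b + yb b - c) + 1) powr (1 - p))
      = (\<Sum>x\<in>(\<lambda>b. xb b + yb b - c) ` F. (lnorm x + 1) powr (1 - p))"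
    by (simp add: sum.reindex)
  also have "\<dots> \<le> Cpd p TYPE('d)"
    unfolding Cpd_def
    by (rule finite_sum_le_infsum) (use summable_on_lnorm_powr[where 'd = 'd, of "p - 1"] p F in auto)
  finally show ?thesis .
qed

lemma bond_sum_le_scaled:
  fixes p :: real and u :: "int ^ 'd::finite \<Rightarrow> real" and a :: "'d bond \<Rightarrow> real"
  assumes p: "p > real CARD('d) + 1" and A: "a \<in> Omega"
    and summable_h: "(\<lambda>b. (grad u b)\<^sup>2 * chem_dist_pow a p (xb b) (yb b)) summable_on UNIV"
    and summable_w: "(\<lambda>b. a b * (grad u b)\<^sup>2) summable_on UNIV"
    and q: "q > 1"
  shows "(\<Sum>\<^sub>\<infinity>b. (grad u b)\<^sup>2 * chem_dist_pow a p (xb b) (yb b))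
           \<le> q powr p * (Cpd p TYPE('d) * (\<Sum>\<^sub>\<infinity>b. a b * (grad u b)\<^sup>2))"
proof -
  define h where "h b = (grad u b)\<^sup>2 * chem_dist_pow a p (xb b) (yb b)" for b
  define w where "w b = a b * (grad u b)\<^sup>2" for b
  define G where "G x = (lnorm x + 1) powr (1 - p)" for x :: "int ^ 'd"
  define C where "C = Cpd p TYPE('d)"
  define mid where "mid e b = xb b + yb b - (xb e + yb e)" for e b :: "'d bond"
  have a_nonneg: "0 \<le> a e" for e using A unfolding Omega_def by blast
  have w0: "0 \<le> w e" for e by (simp add: w_def a_nonneg)
  have C_nonneg: "0 \<le> C" unfolding C_def Cpd_def by (rule infsum_nonneg) simp
  have "\<forall>b. \<exists>E. finite E \<and> h b \<le> q powr p * (\<Sum>e\<in>E. w e * G (mid e b))"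
    using bond_term_le_local_sum[OF A _ q, of p u] p unfolding h_def w_def G_def mid_def by simp
  then obtain E where E: "\<And>b. finite (E b)" "\<And>b. h b \<le> q powr p * (\<Sum>e\<in>E b. w e * G (mid e b))"
    by metis
  have "sum h F \<le> q powr p * (C * infsum w UNIV)" if F: "finite F" for F
  proof -
    define U where "U = \<Union> (E ` F)"
    have U: "finite U" unfolding U_def using F E(1) by auto
    have "sum h F \<le> (\<Sum>b\<in>F. q powr p * (\<Sum>e\<in>E b. w e * G (mid e b)))"
      by (rule sum_mono) (rule E(2))
    also have "\<dots> = q powr p * (\<Sum>b\<in>F. \<Sum>e\<in>{e \<in> U. e \<in> E b}. w e * G (mid e b))"
    proof -
      have "{e \<in> U. e \<in> E b} = E b" if "b \<in> F" for b using that by (auto simp: U_def)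
      then show ?thesis by (simp add: sum_distrib_left)
    qed
    also have "(\<Sum>b\<in>F. \<Sum>e\<in>{e \<in> U. e \<in> E b}. w e * G (mid e b))
        = (\<Sum>e\<in>U. \<Sum>b\<in>{b \<in> F. e \<in> E b}. w e * G (mid e b))"
      by (rule sum.swap_restrict[OF F U])
    also have "\<dots> \<le> (\<Sum>e\<in>U. w e * C)"
    proof (intro sum_mono)
      fix e
      have "(\<Sum>b\<in>{b \<in> F. e \<in> E b}. G (mid e b)) \<le> C"
        unfolding G_def mid_def C_def using F by (intro sum_bond_midpoint_powr_le_Cpd p) auto
      then show "(\<Sum>b\<in>{b \<in> F. e \<in> E b}. w e * G (mid e b)) \<le> w e * C"
        by (simp add: sum_distrib_left[symmetric] mult_left_mono w0)
    qed
    also have "\<dots> = C * sum w U" by (simp add: sum_distrib_left mult.commute)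
    also have "\<dots> \<le> C * infsum w UNIV"
      by (rule mult_left_mono[OF finite_sum_le_infsum[OF summable_w[folded w_def] U] C_nonneg])
        (auto simp: w0)
    finally show ?thesis using q by (simp add: mult_left_mono)
  qed
  then show ?thesis
    unfolding h_def w_def C_def by (intro infsum_le_finite_sums summable_h)
qed

theorem lemma4:
  fixes p :: real and u :: "int ^ 'd::finite \<Rightarrow> real" and a :: "'d bond \<Rightarrow> real"
  assumes "p > real CARD('d) + 1"
    and "a \<in> Omega"
    and "(\<lambda>b. (grad u b)\<^sup>2 * chem_dist_pow a p (xb b) (yb b)) summable_on UNIV"
    and "(\<lambda>b. a b * (grad u b)\<^sup>2) summable_on UNIV"
  shows "(\<Sum>\<^sub>\<infinity>b. (grad u b)\<^sup>2 * chem_dist_pow a p (xb b) (yb b))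
           \<le> Cpd p TYPE('d) * (\<Sum>\<^sub>\<infinity>b. a b * (grad u b)\<^sup>2)"
proof (rule field_le_mult_one_interval)
  fix z :: real assume z: "0 < z" "z < 1"
  define q where "q = z powr (- 1 / p)"
  have p: "p > 0" using assms(1) by simp
  have "q > 1" using powr_less_mono2_neg[of "- 1 / p" z 1] z p unfolding q_def by simp
  have "q powr p = z powr (- 1)" using p unfolding q_def by (simp only: powr_powr) simp
  then have "q powr p = 1 / z" using z by (simp add: powr_minus_divide)
  then have "z * (\<Sum>\<^sub>\<infinity>b. (grad u b)\<^sup>2 * chem_dist_pow a p (xb b) (yb b))
      \<le> z * (1 / z * (Cpd p TYPE('d) * (\<Sum>\<^sub>\<infinity>b. a b * (grad u b)\<^sup>2)))"
    using bond_sum_le_scaled[OF assms \<open>q > 1\<close>] z by (intro mult_left_mono) auto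
  then show "z * (\<Sum>\<^sub>\<infinity>b. (grad u b)\<^sup>2 * chem_dist_pow a p (xb b) (yb b))
      \<le> Cpd p TYPE('d) * (\<Sum>\<^sub>\<infinity>b. a b * (grad u b)\<^sup>2)"
    using z by simp
qed

end
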